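(* Let $G$ be a topological group with identity $e$. The following statements are equivalent: (1) $G$ is an Alexandroff space; (2) $V(e)$ is open; (3) there exist a topological group $E$ carrying the indiscrete topology and a topological group $F$ carrying the discrete topology such that $E\times F$ and $G$ are homeomorphic topological spaces; (4) there exist a topological space $E$ with the indiscrete topology and a discrete topological space $F$ such that $E\times F$ and $G$ are homeomorphic topological spaces.
   Context: For a topological space $X$ and $a\in X$, $V(a):=\bigcap\{U: U\text{ open}, a\in U\}$; $X$ is an Alexandroff space if $V(a)$ is open for every $a\in X$. The indiscrete topology on a set is the topology whose only open sets are the empty set and the whole set. *)

theory Defs
  imports "HOL-Analysis.Analysis" "HOL-Algebra.Group"
begin

definition topological_group :: "('a, 'b) monoid_scheme \<Rightarrow> 'a topology \<Rightarrow> bool" where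
  "topological_group G T \<longleftrightarrow>
     group G \<and> topspace T = carrier G \<and>
     continuous_map (prod_topology T T) T (\<lambda>(x, y). x \<otimes>\<^bsub>G\<^esub> y) \<and>
     continuous_map T T (\<lambda>x. inv\<^bsub>G\<^esub> x)"

definition nbhd_kernel :: "'a topology \<Rightarrow> 'a \<Rightarrow> 'a set" where
  "nbhd_kernel T a = \<Inter>{U. openin T U \<and> a \<in> U}"

definition alexandroff_space :: "'a topology \<Rightarrow> bool" where
  "alexandroff_space T \<longleftrightarrow> (\<forall>a \<in> topspace T. openin T (nbhd_kernel T a))"

definition indiscrete_space :: "'a topology \<Rightarrow> bool" where
  "indiscrete_space T \<longleftrightarrow> (\<forall>U. openin T U \<longleftrightarrow> U = {} \<or> U = topspace T)"

definition discrete_space :: "'a topology \<Rightarrow> bool" where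
  "discrete_space T \<longleftrightarrow> T = discrete_topology (topspace T)"

end

theory Submission
  imports Defs "HOL-Algebra.Coset"
begin

text \<open>Continuous maps send \<open>V(a)\<close> into \<open>V(f a)\<close>. Hence every continuous self-map of
  \<open>G\<close> fixing \<open>e\<close> (inversion, conjugations) maps \<open>N = V(e)\<close> into itself, and right
  translation by \<open>u\<close> maps \<open>N\<close> into \<open>V(u)\<close>. So \<open>N\<close> is a normal subgroup, and every
  open set containing some \<open>n \<in> N\<close> contains \<open>V(n) \<supseteq> N n = N\<close>: the subspace \<open>N\<close>
  is indiscrete. If \<open>N\<close> is open, so is every coset; choosing a representative \<open>r(C)\<close>
  in each coset \<open>C\<close>, the map \<open>(n, C) \<mapsto> n r(C)\<close> is a homeomorphism from
  \<open>N \<times> G/N\<close>, with \<open>G/N\<close> discrete, onto \<open>G\<close>. Conversely, indiscrete and discrete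
  spaces are Alexandroff, \<open>V(x, y) = V(x) \<times> V(y)\<close> in a product, and being Alexandroff
  is invariant under homeomorphism.\<close>

lemma nbhd_kernel_subset: "openin T U \<Longrightarrow> a \<in> U \<Longrightarrow> nbhd_kernel T a \<subseteq> U"
  unfolding nbhd_kernel_def by blast

lemma nbhd_kernel_mem: "a \<in> topspace T \<Longrightarrow> a \<in> nbhd_kernel T a"
  unfolding nbhd_kernel_def by blast

lemma nbhd_kernel_mono: "b \<in> nbhd_kernel T a \<Longrightarrow> nbhd_kernel T b \<subseteq> nbhd_kernel T a"
  unfolding nbhd_kernel_def by blast

lemma continuous_map_image_nbhd_kernel:
  assumes f: "continuous_map X Y f" and a: "a \<in> topspace X"
  shows "f ` nbhd_kernel X a \<subseteq> nbhd_kernel Y (f a)"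
proof (intro image_subsetI)
  fix x assume x: "x \<in> nbhd_kernel X a"
  show "f x \<in> nbhd_kernel Y (f a)"
    unfolding nbhd_kernel_def
  proof (intro InterI, clarify)
    fix W assume W: "openin Y W" "f a \<in> W"
    have "openin X {z \<in> topspace X. f z \<in> W}"
      using f W(1) by (rule openin_continuous_map_preimage)
    then have "nbhd_kernel X a \<subseteq> {z \<in> topspace X. f z \<in> W}"
      using a W(2) by (intro nbhd_kernel_subset) auto
    with x show "f x \<in> W"
      by blast
  qed
qed

lemma homeomorphic_maps_nbhd_kernel:
  assumes fg: "homeomorphic_maps X Y f g" and a: "a \<in> topspace X"
  shows "nbhd_kernel Y (f a) = f ` nbhd_kernel X a"
proof
  have f: "continuous_map X Y f" and g: "continuous_map Y X g"
    and gf: "g (f a) = a" and fg_id: "\<And>y. y \<in> topspace Y \<Longrightarrow> f (g y) = y"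
    using fg a unfolding homeomorphic_maps_def by auto
  show "f ` nbhd_kernel X a \<subseteq> nbhd_kernel Y (f a)"
    using f a by (rule continuous_map_image_nbhd_kernel)
  have fa: "f a \<in> topspace Y"
    using f a by (rule continuous_map_image_subset_topspace[THEN subsetD, OF _ imageI])
  have "g ` nbhd_kernel Y (f a) \<subseteq> nbhd_kernel X a"
    using continuous_map_image_nbhd_kernel[OF g fa] gf by simp
  then have "f ` g ` nbhd_kernel Y (f a) \<subseteq> f ` nbhd_kernel X a"
    by (rule image_mono)
  moreover have "f ` g ` nbhd_kernel Y (f a) = nbhd_kernel Y (f a)"
    using fg_id nbhd_kernel_subset[OF openin_topspace fa] by (force simp: image_iff)
  ultimately show "nbhd_kernel Y (f a) \<subseteq> f ` nbhd_kernel X a"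
    by simp
qed

lemma alexandroff_spaceI:
  assumes "\<And>a. a \<in> topspace T \<Longrightarrow>
             \<exists>U. openin T U \<and> a \<in> U \<and> (\<forall>W. openin T W \<and> a \<in> W \<longrightarrow> U \<subseteq> W)"
  shows "alexandroff_space T"
  unfolding alexandroff_space_def
proof
  fix a assume "a \<in> topspace T"
  then obtain U where U: "openin T U" "a \<in> U" "\<forall>W. openin T W \<and> a \<in> W \<longrightarrow> U \<subseteq> W"
    using assms by blast
  then have "nbhd_kernel T a = U"
    unfolding nbhd_kernel_def by blast
  with U show "openin T (nbhd_kernel T a)" by simp
qed

lemma alexandroff_spaceD:
  "alexandroff_space T \<Longrightarrow> a \<in> topspace T \<Longrightarrow> openin T (nbhd_kernel T a)"
  unfolding alexandroff_space_def by blast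

lemma alexandroff_space_indiscrete:
  assumes "indiscrete_space T"
  shows "alexandroff_space T"
proof (rule alexandroff_spaceI)
  fix a assume "a \<in> topspace T"
  moreover have "openin T W \<Longrightarrow> a \<in> W \<Longrightarrow> topspace T \<subseteq> W" for W
    using assms unfolding indiscrete_space_def by blast
  ultimately show "\<exists>U. openin T U \<and> a \<in> U \<and> (\<forall>W. openin T W \<and> a \<in> W \<longrightarrow> U \<subseteq> W)"
    by blast
qed

lemma alexandroff_space_discrete:
  assumes "discrete_space T"
  shows "alexandroff_space T"
proof -
  have "alexandroff_space (discrete_topology U)" for U :: "'a set"
  proof (rule alexandroff_spaceI)
    fix a assume "a \<in> topspace (discrete_topology U)"
    then show "\<exists>V. openin (discrete_topology U) V \<and> a \<in> V \<and>
        (\<forall>W. openin (discrete_topology U) W \<and> a \<in> W \<longrightarrow> V \<subseteq> W)"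
      by (intro exI[of _ "{a}"]) simp
  qed
  with assms show ?thesis
    unfolding discrete_space_def by metis
qed

lemma alexandroff_space_prod_topology:
  assumes X: "alexandroff_space X" and Y: "alexandroff_space Y"
  shows "alexandroff_space (prod_topology X Y)"
proof (rule alexandroff_spaceI)
  fix p assume "p \<in> topspace (prod_topology X Y)"
  then obtain x y where p: "p = (x, y)" "x \<in> topspace X" "y \<in> topspace Y"
    by auto
  show "\<exists>U. openin (prod_topology X Y) U \<and> p \<in> U \<and>
          (\<forall>W. openin (prod_topology X Y) W \<and> p \<in> W \<longrightarrow> U \<subseteq> W)"
  proof (intro exI[of _ "nbhd_kernel X x \<times> nbhd_kernel Y y"] conjI allI impI)
    show "openin (prod_topology X Y) (nbhd_kernel X x \<times> nbhd_kernel Y y)"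
      using X Y p by (simp add: openin_prod_Times_iff alexandroff_spaceD)
    show "p \<in> nbhd_kernel X x \<times> nbhd_kernel Y y"
      using p by (simp add: nbhd_kernel_mem)
    fix W assume "openin (prod_topology X Y) W \<and> p \<in> W"
    then obtain U V where "openin X U" "openin Y V" "x \<in> U" "y \<in> V" and UV: "U \<times> V \<subseteq> W"
      using p(1) unfolding openin_prod_topology_alt by blast
    then have "nbhd_kernel X x \<subseteq> U" "nbhd_kernel Y y \<subseteq> V"
      by (simp_all add: nbhd_kernel_subset)
    with UV show "nbhd_kernel X x \<times> nbhd_kernel Y y \<subseteq> W"
      by blast
  qed
qed

lemma homeomorphic_alexandroff_space:
  assumes "X homeomorphic_space Y" and X: "alexandroff_space X"
  shows "alexandroff_space Y"
  unfolding alexandroff_space_def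
proof
  obtain f g where fg: "homeomorphic_maps X Y f g"
    using assms(1) unfolding homeomorphic_space_def by blast
  fix b assume b: "b \<in> topspace Y"
  have a: "g b \<in> topspace X" "f (g b) = b"
    using fg b unfolding homeomorphic_maps_def continuous_map_def by auto
  have "openin X (nbhd_kernel X (g b))"
    using X a(1) by (rule alexandroff_spaceD)
  then have "openin Y (f ` nbhd_kernel X (g b))"
    using homeomorphic_map_openness_eq fg homeomorphic_maps_map by blast
  then show "openin Y (nbhd_kernel Y b)"
    using homeomorphic_maps_nbhd_kernel[OF fg a(1)] a(2) by simp
qed

lemma alexandroff_space_prod_indiscrete_discrete:
  assumes "indiscrete_space TE" "discrete_space TF"
    and "prod_topology TE TF homeomorphic_space T"
  shows "alexandroff_space T"
  using assms(3) alexandroff_space_prod_topology[OF alexandroff_space_indiscrete[OF assms(1)]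
      alexandroff_space_discrete[OF assms(2)]]
  by (rule homeomorphic_alexandroff_space)

lemma continuous_map_into_indiscrete:
  assumes "indiscrete_space Y" "f \<in> topspace X \<rightarrow> topspace Y"
  shows "continuous_map X Y f"
  unfolding continuous_map_def
proof (intro conjI allI impI)
  show "f \<in> topspace X \<rightarrow> topspace Y"
    by fact
  fix U assume "openin Y U"
  then have "U = {} \<or> U = topspace Y"
    using assms(1) unfolding indiscrete_space_def by blast
  moreover have "{x \<in> topspace X. f x \<in> topspace Y} = topspace X"
    using assms(2) by auto
  ultimately show "openin X {x \<in> topspace X. f x \<in> U}"
    by auto
qed

lemma group_truncate: "group G \<Longrightarrow> group (monoid.truncate G)"
  unfolding group_def group_axioms_def monoid_def Units_def by (simp add: monoid.defs)

lemma topological_group_topspace: "topological_group G T \<Longrightarrow> topspace T = carrier G"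
  by (simp add: topological_group_def)

lemma topological_group_indiscrete:
  assumes E: "group E" and TE: "indiscrete_space TE" "topspace TE = carrier E"
  shows "topological_group E TE"
proof -
  have "(\<lambda>(x, y). x \<otimes>\<^bsub>E\<^esub> y) \<in> topspace (prod_topology TE TE) \<rightarrow> topspace TE"
    using monoid.m_closed[OF group.is_monoid[OF E]] TE(2) by (auto simp: Pi_iff)
  moreover have "(\<lambda>x. inv\<^bsub>E\<^esub> x) \<in> topspace TE \<rightarrow> topspace TE"
    using group.inv_closed[OF E] TE(2) by (auto simp: Pi_iff)
  ultimately show ?thesis
    unfolding topological_group_def using E TE by (simp add: continuous_map_into_indiscrete)
qed

lemma topological_group_discrete_topology:
  assumes "group F"
  shows "topological_group F (discrete_topology (carrier F))"
  unfolding topological_group_def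
proof (intro conjI)
  show "continuous_map (prod_topology (discrete_topology (carrier F)) (discrete_topology (carrier F)))
      (discrete_topology (carrier F)) (\<lambda>(x, y). x \<otimes>\<^bsub>F\<^esub> y)"
    unfolding prod_topology_discrete_topology[symmetric]
    using group.is_monoid[OF assms] by (auto simp: monoid.m_closed)
  show "continuous_map (discrete_topology (carrier F)) (discrete_topology (carrier F)) (\<lambda>x. inv\<^bsub>F\<^esub> x)"
    using assms by (auto simp: group.inv_closed)
qed (use assms in auto)

lemma (in group) topological_group_translations:
  assumes "topological_group G T" "c \<in> carrier G"
  shows "continuous_map T T (\<lambda>x. x \<otimes> c)" "continuous_map T T (\<lambda>x. c \<otimes> x)"
proof -
  have ts: "topspace T = carrier G"
    and mult: "continuous_map (prod_topology T T) T (\<lambda>(x, y). x \<otimes> y)"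
    using assms(1) unfolding topological_group_def by auto
  have "continuous_map T (prod_topology T T) (\<lambda>x. (x, c))"
    "continuous_map T (prod_topology T T) (\<lambda>x. (c, x))"
    using assms(2) ts by (auto intro!: continuous_map_pairedI)
  from this[THEN continuous_map_compose, OF mult]
  show "continuous_map T T (\<lambda>x. x \<otimes> c)" "continuous_map T T (\<lambda>x. c \<otimes> x)"
    by (simp_all add: o_def)
qed

lemma (in group) openin_rcos:
  assumes tg: "topological_group G T" and U: "openin T U" and g: "g \<in> carrier G"
  shows "openin T (U #> g)"
proof -
  have ts: "topspace T = carrier G"
    using tg by (rule topological_group_topspace)
  have U_carrier: "U \<subseteq> carrier G"
    using openin_subset[OF U] ts by simp
  have "U #> g = {x \<in> topspace T. x \<otimes> inv g \<in> U}"
  proof (intro equalityI subsetI)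
    fix x assume "x \<in> U #> g"
    then obtain u where "u \<in> U" "x = u \<otimes> g"
      unfolding r_coset_def by blast
    with U_carrier g ts show "x \<in> {x \<in> topspace T. x \<otimes> inv g \<in> U}"
      by (auto simp: m_assoc)
  next
    fix x assume x: "x \<in> {x \<in> topspace T. x \<otimes> inv g \<in> U}"
    then have "x \<otimes> inv g \<otimes> g \<in> U #> g"
      using U_carrier g by (intro rcosI) auto
    with x g ts show "x \<in> U #> g"
      by (simp add: m_assoc)
  qed
  also have "openin T \<dots>"
    using topological_group_translations(1)[OF tg inv_closed[OF g]] U
    by (rule openin_continuous_map_preimage)
  finally show ?thesis .
qed

lemma (in group) nbhd_kernel_one_mult:
  assumes "topological_group G T" "n \<in> nbhd_kernel T \<one>" "u \<in> carrier G"
  shows "n \<otimes> u \<in> nbhd_kernel T u"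
proof -
  have "topspace T = carrier G"
    using assms(1) by (rule topological_group_topspace)
  then have "(\<lambda>x. x \<otimes> u) ` nbhd_kernel T \<one> \<subseteq> nbhd_kernel T (\<one> \<otimes> u)"
    by (intro continuous_map_image_nbhd_kernel topological_group_translations assms) simp
  with assms(2,3) show ?thesis
    by auto
qed

lemma (in group) normal_nbhd_kernel_one:
  assumes tg: "topological_group G T"
  shows "nbhd_kernel T \<one> \<lhd> G"
proof -
  define N where "N = nbhd_kernel T \<one>"
  have ts: "topspace T = carrier G"
    using tg by (rule topological_group_topspace)
  have inv: "continuous_map T T (\<lambda>x. inv x)"
    using tg unfolding topological_group_def by blast
  have N: "N \<subseteq> carrier G"
    unfolding N_def ts[symmetric] by (rule nbhd_kernel_subset[OF openin_topspace]) (simp add: ts)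
  have one: "\<one> \<in> N"
    unfolding N_def by (rule nbhd_kernel_mem) (simp add: ts)
  have fixes_one: "f ` N \<subseteq> N" if "continuous_map T T f" "f \<one> = \<one>" for f
    using continuous_map_image_nbhd_kernel[OF that(1), of \<one>] that(2) ts unfolding N_def by simp
  have "subgroup N G"
  proof (rule subgroupI)
    show "N \<subseteq> carrier G" "N \<noteq> {}"
      using N one by auto
    have "(\<lambda>x. inv x) ` N \<subseteq> N"
      by (rule fixes_one[OF inv]) simp
    then show "inv a \<in> N" if "a \<in> N" for a
      using that by blast
    show "a \<otimes> b \<in> N" if a: "a \<in> N" and b: "b \<in> N" for a b
    proof -
      have "a \<otimes> b \<in> nbhd_kernel T b"
        using a b N unfolding N_def by (intro nbhd_kernel_one_mult[OF tg]) auto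
      moreover have "nbhd_kernel T b \<subseteq> N"
        using b unfolding N_def by (rule nbhd_kernel_mono)
      ultimately show ?thesis
        by blast
    qed
  qed
  moreover have "x \<otimes> h \<otimes> inv x \<in> N" if x: "x \<in> carrier G" and h: "h \<in> N" for x h
  proof -
    have "continuous_map T T (\<lambda>h. x \<otimes> h \<otimes> inv x)"
      using continuous_map_compose[OF topological_group_translations(2)[OF tg x]
          topological_group_translations(1)[OF tg inv_closed[OF x]]]
      by (simp add: o_def)
    then have "(\<lambda>h. x \<otimes> h \<otimes> inv x) ` N \<subseteq> N"
      by (rule fixes_one) (simp add: x)
    with h show ?thesis
      by blast
  qed
  ultimately show ?thesis
    unfolding N_def normal_inv_iff by blast
qed

lemma (in group) nbhd_kernel_one_subset_open:
  assumes tg: "topological_group G T" and V: "openin T V" "n \<in> V"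
    and n: "n \<in> nbhd_kernel T \<one>"
  shows "nbhd_kernel T \<one> \<subseteq> V"
proof
  define N where "N = nbhd_kernel T \<one>"
  have sub: "subgroup N G"
    unfolding N_def using normal_nbhd_kernel_one[OF tg] by (rule normal_imp_subgroup)
  fix m assume "m \<in> nbhd_kernel T \<one>"
  then have m: "m \<in> N"
    unfolding N_def .
  then have "m \<otimes> inv n \<in> N"
    using sub n unfolding N_def by (simp add: subgroup.m_closed subgroup.m_inv_closed)
  then have "m \<otimes> inv n \<otimes> n \<in> nbhd_kernel T n"
    unfolding N_def by (rule nbhd_kernel_one_mult[OF tg]) (rule subgroup.mem_carrier[OF sub n[folded N_def]])
  moreover have "nbhd_kernel T n \<subseteq> V"
    using V by (rule nbhd_kernel_subset)
  moreover have "m \<otimes> inv n \<otimes> n = m"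
    using m n[folded N_def] subgroup.mem_carrier[OF sub] by (simp add: m_assoc)
  ultimately show "m \<in> V"
    by auto
qed

lemma (in group) indiscrete_space_subtopology_nbhd_kernel_one:
  assumes tg: "topological_group G T"
  shows "indiscrete_space (subtopology T (nbhd_kernel T \<one>))"
  unfolding indiscrete_space_def
proof (intro allI iffI)
  let ?N = "nbhd_kernel T \<one>"
  have topspace: "topspace (subtopology T ?N) = ?N"
    using topological_group_topspace[OF tg] normal_nbhd_kernel_one[OF tg]
    by (auto dest: normal_imp_subgroup subgroup.mem_carrier)
  fix U
  show "U = {} \<or> U = topspace (subtopology T ?N)" if U: "openin (subtopology T ?N) U"
  proof (cases "U = {}")
    case False
    obtain V where V: "openin T V" "U = V \<inter> ?N"
      using U unfolding openin_subtopology by blast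
    with False obtain n where "n \<in> V" "n \<in> ?N"
      by blast
    with V have "U = ?N"
      using nbhd_kernel_one_subset_open[OF tg] by blast
    with topspace show ?thesis
      by simp
  qed simp
  show "openin (subtopology T ?N) U" if "U = {} \<or> U = topspace (subtopology T ?N)"
    using that openin_empty openin_topspace by metis
qed

lemma (in group) rcosets_eq_r_coset:
  assumes N: "subgroup N G" and C: "C \<in> rcosets N" and g: "g \<in> C"
  shows "C = N #> g"
proof -
  obtain a where a: "a \<in> carrier G" "C = N #> a"
    using C unfolding RCOSETS_def by blast
  have "N #> a = N #> g"
    using g a N by (intro repr_independence) simp_all
  with a(2) show ?thesis
    by simp
qed

lemma (in group) continuous_map_coset_coordinates:
  assumes tg: "topological_group G T" and N: "subgroup N G" "openin T N"
    and r: "\<And>C. C \<in> rcosets N \<Longrightarrow> r C \<in> C"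
  shows "continuous_map T (prod_topology (subtopology T N) (discrete_topology (rcosets N)))
           (\<lambda>g. (g \<otimes> inv (r (N #> g)), N #> g))"
proof (rule pasting_lemma[where I = "rcosets N" and T = "\<lambda>C. C"
      and f = "\<lambda>C g. (g \<otimes> inv (r C), C)"])
  fix C assume C: "C \<in> rcosets N"
  have rC: "r C \<in> carrier G" "N #> r C = C"
    using subgroup.rcosets_carrier[OF N(1) is_group C] r[OF C]
      rcosets_eq_r_coset[OF N(1) C r[OF C]] by auto
  show "openin T C"
    using openin_rcos[OF tg N(2) rC(1)] rC(2) by simp
  have "continuous_map (subtopology T C) T (\<lambda>g. g \<otimes> inv (r C))"
    using topological_group_translations(1)[OF tg inv_closed[OF rC(1)]]
    by (rule continuous_map_from_subtopology)
  moreover have "g \<otimes> inv (r C) \<in> N" if "g \<in> C" for g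
    using subgroup.rcos_module_imp[OF N(1) is_group rC(1)] that rC(2) by blast
  ultimately have "continuous_map (subtopology T C) (subtopology T N) (\<lambda>g. g \<otimes> inv (r C))"
    by (auto simp: continuous_map_in_subtopology)
  then show "continuous_map (subtopology T C)
      (prod_topology (subtopology T N) (discrete_topology (rcosets N))) (\<lambda>g. (g \<otimes> inv (r C), C))"
    using C by (intro continuous_map_pairedI) auto
next
  fix C C' g assume "C \<in> rcosets N" "C' \<in> rcosets N" "g \<in> topspace T \<inter> C \<inter> C'"
  then have "C = C'"
    using rcosets_eq_r_coset[OF N(1), of C g] rcosets_eq_r_coset[OF N(1), of C' g] by simp
  then show "(g \<otimes> inv (r C), C) = (g \<otimes> inv (r C'), C')"
    by simp
next
  fix g assume "g \<in> topspace T"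
  then have "N #> g \<in> rcosets N" "g \<in> N #> g"
    using topological_group_topspace[OF tg] subgroup.subset[OF N(1)] N(1)
    by (auto intro: rcosetsI rcos_self)
  then show "\<exists>C. C \<in> rcosets N \<and> g \<in> C \<and>
      (g \<otimes> inv (r (N #> g)), N #> g) = (g \<otimes> inv (r C), C)"
    by (intro exI[of _ "N #> g"]) simp
qed

lemma (in group) prod_rcosets_homeomorphic_space:
  assumes tg: "topological_group G T" and N: "subgroup N G" "openin T N"
  shows "prod_topology (subtopology T N) (discrete_topology (rcosets N)) homeomorphic_space T"
proof -
  let ?P = "prod_topology (subtopology T N) (discrete_topology (rcosets N))"
  have ts: "topspace T = carrier G"
    using tg by (rule topological_group_topspace)
  have N_carrier: "N \<subseteq> carrier G"
    using N(1) by (rule subgroup.subset)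
  define r where "r C = (SOME g. g \<in> C)" for C :: "'a set"
  have r_mem: "r C \<in> C" if C: "C \<in> rcosets N" for C
    using subgroup.rcosets_non_empty[OF N(1) C] unfolding r_def by (auto intro: someI)
  have r: "r C \<in> carrier G" "N #> r C = C" if C: "C \<in> rcosets N" for C
    using subgroup.rcosets_carrier[OF N(1) is_group C] r_mem[OF C]
      rcosets_eq_r_coset[OF N(1) C r_mem[OF C]] by auto
  define f where "f = (\<lambda>(n, C). n \<otimes> r C)"
  define h where "h g = (g \<otimes> inv (r (N #> g)), N #> g)" for g
  have mult: "continuous_map (prod_topology T T) T (\<lambda>(x, y). x \<otimes> y)"
    using tg unfolding topological_group_def by blast
  have "continuous_map ?P (prod_topology T T) (\<lambda>(n, C). (n, r C))"
    using r(1) ts by (auto simp: continuous_map_prod_top continuous_map_from_subtopology)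
  from continuous_map_compose[OF this mult] have cont_f: "continuous_map ?P T f"
    unfolding f_def by (simp add: o_def case_prod_unfold)
  have cont_h: "continuous_map T ?P h"
    unfolding h_def[abs_def] using tg N r_mem by (rule continuous_map_coset_coordinates)
  have "h (f p) = p" if p_in: "p \<in> topspace ?P" for p
  proof -
    obtain n C where p: "p = (n, C)" "n \<in> N" "C \<in> rcosets N"
      using p_in by auto
    have "n \<otimes> r C \<in> C"
      using rcosI[OF p(2) N_carrier r(1)[OF p(3)]] r(2)[OF p(3)] by simp
    then have "N #> (n \<otimes> r C) = C"
      using rcosets_eq_r_coset[OF N(1) p(3)] by simp
    with p r(1)[OF p(3)] N_carrier show ?thesis
      unfolding f_def h_def by (auto simp: m_assoc)
  qed
  moreover have "f (h g) = g" if "g \<in> topspace T" for g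
    using that ts r(1)[OF rcosetsI[OF N_carrier, of g]] unfolding f_def h_def
    by (simp add: m_assoc)
  ultimately have "homeomorphic_maps ?P T f h"
    unfolding homeomorphic_maps_def using cont_f cont_h by blast
  then show ?thesis
    unfolding homeomorphic_space_def by blast
qed

lemma (in group) open_nbhd_kernel_one_imp_decomposition:
  assumes tg: "topological_group G T" and open_N: "openin T (nbhd_kernel T \<one>)"
  shows "\<exists>(E :: 'a monoid) TE (F :: 'a set monoid) TF.
           topological_group E TE \<and> indiscrete_space TE \<and>
           topological_group F TF \<and> discrete_space TF \<and>
           prod_topology TE TF homeomorphic_space T"
proof -
  define N where "N = nbhd_kernel T \<one>"
  have normal: "N \<lhd> G"
    unfolding N_def using tg by (rule normal_nbhd_kernel_one)
  then have sub: "subgroup N G"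
    by (rule normal_imp_subgroup)
  \<comment> \<open>\<open>E\<close> must have type \<open>'a monoid\<close>, so the record extension of \<open>G\<close> is dropped.\<close>
  define E where "E = monoid.truncate (G\<lparr>carrier := N\<rparr>)"
  have "group E"
    unfolding E_def using subgroup_imp_group[OF sub] by (rule group_truncate)
  moreover have indiscrete: "indiscrete_space (subtopology T N)"
    unfolding N_def using tg by (rule indiscrete_space_subtopology_nbhd_kernel_one)
  moreover have "topspace (subtopology T N) = carrier E"
    using topological_group_topspace[OF tg] subgroup.subset[OF sub]
    by (auto simp: E_def monoid.defs)
  ultimately have "topological_group E (subtopology T N)"
    by (rule topological_group_indiscrete)
  moreover have "topological_group (G Mod N) (discrete_topology (rcosets N))"
    using topological_group_discrete_topology[OF normal.factorgroup_is_group[OF normal]]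
    by (simp add: FactGroup_def)
  moreover have "discrete_space (discrete_topology (rcosets N))"
    by (simp add: discrete_space_def)
  moreover have "prod_topology (subtopology T N) (discrete_topology (rcosets N)) homeomorphic_space T"
    using tg sub open_N unfolding N_def by (rule prod_rcosets_homeomorphic_space)
  ultimately show ?thesis
    using indiscrete by blast
qed

theorem mainTheorem10:
  fixes G :: "('a, 'b) monoid_scheme" and T :: "'a topology"
  assumes "topological_group G T"
  shows
   "(alexandroff_space T \<longleftrightarrow> openin T (nbhd_kernel T \<one>\<^bsub>G\<^esub>))
    \<and> (alexandroff_space T \<longleftrightarrow>
        (\<exists>(E :: 'a monoid) TE (F :: 'a set monoid) TF.
           topological_group E TE \<and> indiscrete_space TE \<and>
           topological_group F TF \<and> discrete_space TF \<and>
           prod_topology TE TF homeomorphic_space T))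
    \<and> (alexandroff_space T \<longleftrightarrow>
        (\<exists>(TE :: 'a topology) (TF :: 'a set topology).
           indiscrete_space TE \<and> discrete_space TF \<and>
           prod_topology TE TF homeomorphic_space T))
    \<and> ((\<exists>(E :: ('e, 'c) monoid_scheme) TE (F :: ('f, 'd) monoid_scheme) TF.
           topological_group E TE \<and> indiscrete_space TE \<and>
           topological_group F TF \<and> discrete_space TF \<and>
           prod_topology TE TF homeomorphic_space T) \<longrightarrow> alexandroff_space T)
    \<and> ((\<exists>(TE :: 'e topology) (TF :: 'f topology).
           indiscrete_space TE \<and> discrete_space TF \<and>
           prod_topology TE TF homeomorphic_space T) \<longrightarrow> alexandroff_space T)"
proof -
  interpret group G
    using assms by (simp add: topological_group_def)
  have "\<one>\<^bsub>G\<^esub> \<in> topspace T"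
    using topological_group_topspace[OF assms] by simp
  then have open_if_alexandroff: "alexandroff_space T \<Longrightarrow> openin T (nbhd_kernel T \<one>\<^bsub>G\<^esub>)"
    by (intro alexandroff_spaceD)
  note decomposition_if_open = open_nbhd_kernel_one_imp_decomposition[OF assms]
  have alexandroff_if_spaces: "alexandroff_space T"
    if "\<exists>(TE :: 'x topology) (TF :: 'y topology).
          indiscrete_space TE \<and> discrete_space TF \<and> prod_topology TE TF homeomorphic_space T"
    using that by (elim exE conjE) (rule alexandroff_space_prod_indiscrete_discrete)
  have alexandroff_if_groups: "alexandroff_space T"
    if "\<exists>(E :: ('x, 'y) monoid_scheme) TE (F :: ('z, 'w) monoid_scheme) TF.
          topological_group E TE \<and> indiscrete_space TE \<and> topological_group F TF \<and>
          discrete_space TF \<and> prod_topology TE TF homeomorphic_space T"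
    using that by (elim exE conjE) (rule alexandroff_space_prod_indiscrete_discrete)
  show ?thesis
    using open_if_alexandroff decomposition_if_open alexandroff_if_groups alexandroff_if_spaces
    by (intro conjI impI; blast)
qed

end
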